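(* Let $V$ be a finite set and $\{\eta(t),t\ge0\}$ a consistent configuration process on $\Omega$. Then for all $f:\Omega\to\mathbb R$, all $\eta\in\Omega$ and all $t\ge0$, $$\sum_{i\in V}\mathbb E_\eta\big[\eta_i(t)f(\eta(t)-\delta_i)\big]=\sum_{i\in V}\eta_i\,\mathbb E_{\eta-\delta_i}\big[f(\eta(t))\big],$$ where terms with $\eta_i(t)=0$, resp. $\eta_i=0$, are zero.
   Context: $\Lambda\subseteq\mathbb N_0$ is the single-site state space, $\Omega=\{\eta\in\Lambda^V:\sum_x\eta_x<\infty\}$, $\delta_z$ the configuration with one particle at $z$. A configuration process is a Markov process on $\Omega$ conserving the number of particles, with generator $\mathcal L$; $\mathbb E_\eta$ denotes expectation for the process started at $\eta$. It is consistent if $[\mathcal L,\mathcal A]=0$, where $\mathcal Af(\eta)=\sum_{x\in V}\eta_xf(\eta-\delta_x)$ (terms with $\eta_x=0$ are zero). *)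

theory Defs
  imports "HOL-Analysis.Analysis"
begin

type_synonym 'v conf = "'v \<Rightarrow> nat"

definition Omega :: "nat set \<Rightarrow> 'v conf set" where
  "Omega Lam = {\<eta>. \<forall>x. \<eta> x \<in> Lam}"

text \<open>eta - delta_x (only used when eta x > 0, or multiplied by eta x = 0)\<close>
definition minus_delta :: "'v conf \<Rightarrow> 'v \<Rightarrow> 'v conf" where
  "minus_delta \<eta> x = \<eta>(x := \<eta> x - 1)"

definition total :: "('v::finite) conf \<Rightarrow> nat" where
  "total \<eta> = (\<Sum>x\<in>UNIV. \<eta> x)"

definition sector :: "nat set \<Rightarrow> ('v::finite) conf \<Rightarrow> 'v conf set" where
  "sector Lam \<eta> = {\<zeta> \<in> Omega Lam. total \<zeta> = total \<eta>}"

definition gen :: "nat set \<Rightarrow> (('v::finite) conf \<Rightarrow> 'v conf \<Rightarrow> real)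
     \<Rightarrow> ('v conf \<Rightarrow> real) \<Rightarrow> 'v conf \<Rightarrow> real" where
  "gen Lam q f \<eta> = (\<Sum>\<zeta>\<in>sector Lam \<eta>. q \<eta> \<zeta> * (f \<zeta> - f \<eta>))"

definition annih :: "(('v::finite) conf \<Rightarrow> real) \<Rightarrow> 'v conf \<Rightarrow> real" where
  "annih f \<eta> = (\<Sum>x\<in>UNIV. real (\<eta> x) * f (minus_delta \<eta> x))"

definition consistent :: "nat set \<Rightarrow> (('v::finite) conf \<Rightarrow> 'v conf \<Rightarrow> real) \<Rightarrow> bool" where
  "consistent Lam q \<longleftrightarrow>
     (\<forall>f. \<forall>\<eta>\<in>Omega Lam. gen Lam q (annih f) \<eta> = annih (gen Lam q f) \<eta>)"

text \<open>p t eta xi = P_eta(eta(t) = xi): the transition function of the configuration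
  process with jump rates q (generator gen Lam q), characterised as the solution of
  Kolmogorov's backward equation on the (finite) particle-number sectors.\<close>
definition config_process :: "nat set \<Rightarrow> (('v::finite) conf \<Rightarrow> 'v conf \<Rightarrow> real)
     \<Rightarrow> (real \<Rightarrow> 'v conf \<Rightarrow> 'v conf \<Rightarrow> real) \<Rightarrow> bool" where
  "config_process Lam q p \<longleftrightarrow>
     (\<forall>\<eta>\<in>Omega Lam. \<forall>\<zeta>\<in>sector Lam \<eta>. \<zeta> \<noteq> \<eta> \<longrightarrow> q \<eta> \<zeta> \<ge> 0) \<and>
     (\<forall>\<eta>\<in>Omega Lam. \<forall>\<xi>. p 0 \<eta> \<xi> = (if \<xi> = \<eta> then 1 else 0)) \<and>
     (\<forall>\<eta>\<in>Omega Lam. \<forall>t\<ge>0. \<forall>\<xi>. \<xi> \<notin> sector Lam \<eta> \<longrightarrow> p t \<eta> \<xi> = 0) \<and>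
     (\<forall>\<eta>\<in>Omega Lam. \<forall>t\<ge>0. \<forall>\<xi>. p t \<eta> \<xi> \<ge> 0) \<and>
     (\<forall>\<eta>\<in>Omega Lam. \<forall>t\<ge>0. (\<Sum>\<xi>\<in>sector Lam \<eta>. p t \<eta> \<xi>) = 1) \<and>
     (\<forall>\<eta>\<in>Omega Lam. \<forall>\<xi>. \<forall>t\<ge>0.
        ((\<lambda>s. p s \<eta> \<xi>) has_real_derivative
           (\<Sum>\<zeta>\<in>sector Lam \<eta>. q \<eta> \<zeta> * (p t \<zeta> \<xi> - p t \<eta> \<xi>))) (at t within {0..}))"

definition expect :: "nat set \<Rightarrow> (real \<Rightarrow> ('v::finite) conf \<Rightarrow> 'v conf \<Rightarrow> real)
     \<Rightarrow> real \<Rightarrow> 'v conf \<Rightarrow> ('v conf \<Rightarrow> real) \<Rightarrow> real" where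
  "expect Lam p t \<eta> g = (\<Sum>\<xi>\<in>sector Lam \<eta>. p t \<eta> \<xi> * g \<xi>)"

end

theory Submission
  imports Defs
begin

text \<open>Write \<open>S\<^sub>t g (\<zeta>) = E\<^sub>\<zeta>[g(\<eta>(t))]\<close>. The left-hand side is
  \<open>u t \<eta> = S\<^sub>t (A f) (\<eta>)\<close> and the right-hand side is \<open>w t \<eta> = A (S\<^sub>t f) (\<eta>)\<close>.
  Both solve Kolmogorov's backward equation \<open>\<partial>\<^sub>t v = L v\<close> with initial value \<open>A f\<close>:
  \<open>u\<close> directly, and \<open>w\<close> because consistency moves \<open>L\<close> past \<open>A\<close>. Since \<open>L\<close>
  conserves the particle number, on the finite sector of \<open>\<eta>\<close> this is a linear ODE with
  constant coefficients, and a Gronwall estimate for \<open>\<Sum> (u - w)\<^sup>2\<close> shows that its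
  solution is unique.\<close>

lemma finite_sector: "finite (sector Lam (\<eta>::('v::finite) conf))"
proof -
  have "sector Lam \<eta> \<subseteq> (\<Pi>\<^sub>E i \<in> UNIV. {..total \<eta>})"
  proof
    fix \<zeta> assume \<zeta>: "\<zeta> \<in> sector Lam \<eta>"
    have "\<zeta> x \<le> total \<eta>" for x
    proof -
      have "\<zeta> x \<le> total \<zeta>" unfolding total_def by (rule member_le_sum) auto
      with \<zeta> show ?thesis by (simp add: sector_def)
    qed
    then show "\<zeta> \<in> (\<Pi>\<^sub>E i \<in> UNIV. {..total \<eta>})" by auto
  qed
  moreover have "finite (\<Pi>\<^sub>E i \<in> (UNIV::'v set). {..total \<eta>})"
    by (rule finite_PiE) auto
  ultimately show ?thesis by (rule finite_subset)
qed

lemma sector_eq: "\<zeta> \<in> sector Lam \<eta> \<Longrightarrow> sector Lam \<zeta> = sector Lam \<eta>"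
  by (auto simp: sector_def)

lemma sector_self: "\<eta> \<in> Omega Lam \<Longrightarrow> \<eta> \<in> sector Lam \<eta>"
  by (auto simp: sector_def)

lemma sector_subset_Omega: "sector Lam \<eta> \<subseteq> Omega Lam"
  by (auto simp: sector_def)

lemma minus_delta_in_Omega:
  assumes Lam_down: "\<And>n. Suc n \<in> Lam \<Longrightarrow> n \<in> Lam" and \<eta>: "\<eta> \<in> Omega Lam"
  shows "minus_delta \<eta> x \<in> Omega Lam"
proof -
  have "\<eta> x \<in> Lam" using \<eta> by (simp add: Omega_def)
  then have "\<eta> x - 1 \<in> Lam" using Lam_down by (cases "\<eta> x") auto
  with \<eta> show ?thesis by (auto simp: Omega_def minus_delta_def)
qed

lemma derivative_le_linear_imp_nonpos:
  fixes N N' :: "real \<Rightarrow> real"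
  assumes deriv: "\<And>s. s \<ge> 0 \<Longrightarrow> (N has_real_derivative N' s) (at s within {0..})"
    and bound: "\<And>s. s \<ge> 0 \<Longrightarrow> N' s \<le> C * N s"
    and init: "N 0 = 0" and t: "t \<ge> 0"
  shows "N t \<le> 0"
proof -
  define g where "g s = exp (- C * s) * N s" for s
  have g_deriv: "(g has_real_derivative exp (- C * s) * (N' s - C * N s)) (at s within {0..})"
    if "s \<ge> 0" for s
    unfolding g_def using that
    by (auto intro!: derivative_eq_intros deriv simp: algebra_simps)
  have "g t \<le> g 0"
  proof (rule DERIV_nonpos_imp_decreasing_open[OF t])
    fix s :: real assume s: "0 < s" "s < t"
    then have "at s within {0..} = at s" by (intro at_within_interior) simp
    with g_deriv[of s] s have "DERIV g s :> exp (- C * s) * (N' s - C * N s)" by simp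
    moreover have "exp (- C * s) * (N' s - C * N s) \<le> 0"
      using bound[of s] s by (intro mult_nonneg_nonpos) auto
    ultimately show "\<exists>y. DERIV g s :> y \<and> y \<le> 0" by blast
  next
    have "continuous (at s within {0..t}) g" if "s \<in> {0..t}" for s
      using that g_deriv[of s]
      by (auto intro: continuous_within_subset[of _ "{0..}"] DERIV_continuous)
    then show "continuous_on {0..t} g" by (simp add: continuous_on_eq_continuous_within)
  qed
  with init show ?thesis by (simp add: g_def mult_le_0_iff)
qed

lemma two_mult_mult_le_abs_mult_sum_squares:
  fixes a b c :: real
  shows "2 * a * (c * b) \<le> \<bar>c\<bar> * (a\<^sup>2 + b\<^sup>2)"
proof -
  have "2 * a * (c * b) \<le> \<bar>2 * a * (c * b)\<bar>" by (rule abs_ge_self)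
  also have "\<dots> = \<bar>c\<bar> * (2 * \<bar>a\<bar> * \<bar>b\<bar>)" by (simp add: abs_mult)
  also have "2 * \<bar>a\<bar> * \<bar>b\<bar> \<le> a\<^sup>2 + b\<^sup>2"
    using sum_squares_bound[of "\<bar>a\<bar>" "\<bar>b\<bar>"] by simp
  finally show ?thesis by (simp add: mult_left_mono)
qed

lemma linear_ode_zero_solution:
  fixes d :: "real \<Rightarrow> 'a \<Rightarrow> real" and A :: "'a \<Rightarrow> 'a \<Rightarrow> real"
  assumes K: "finite K"
    and deriv: "\<And>z s. z \<in> K \<Longrightarrow> s \<ge> 0 \<Longrightarrow>
      ((\<lambda>s. d s z) has_real_derivative (\<Sum>y\<in>K. A z y * d s y)) (at s within {0..})"
    and init: "\<And>z. z \<in> K \<Longrightarrow> d 0 z = 0"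
    and z: "z \<in> K" and t: "t \<ge> 0"
  shows "d t z = 0"
proof -
  define N where "N s = (\<Sum>z\<in>K. (d s z)\<^sup>2)" for s
  define N' where "N' s = (\<Sum>z\<in>K. 2 * d s z * (\<Sum>y\<in>K. A z y * d s y))" for s
  define Q where "Q = (\<Sum>z\<in>K. \<Sum>y\<in>K. \<bar>A z y\<bar>)"
  have A_bound: "\<bar>A z y\<bar> \<le> Q" if "z \<in> K" "y \<in> K" for z y
  proof -
    have "\<bar>A z y\<bar> \<le> (\<Sum>y\<in>K. \<bar>A z y\<bar>)" by (rule member_le_sum) (use that K in auto)
    also have "\<dots> \<le> Q" unfolding Q_def
      by (rule member_le_sum[of z]) (use that K in \<open>auto intro: sum_nonneg\<close>)
    finally show ?thesis .
  qed
  have "N t \<le> 0"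
  proof (rule derivative_le_linear_imp_nonpos[of N N' "2 * Q * card K"])
    show "(N has_real_derivative N' s) (at s within {0..})" if "s \<ge> 0" for s
      unfolding N_def N'_def using that
      by (auto intro!: derivative_eq_intros deriv simp: algebra_simps)
    show "N' s \<le> 2 * Q * card K * N s" for s
    proof -
      have "N' s = (\<Sum>z\<in>K. \<Sum>y\<in>K. 2 * d s z * (A z y * d s y))"
        unfolding N'_def by (simp add: sum_distrib_left)
      also have "\<dots> \<le> (\<Sum>z\<in>K. \<Sum>y\<in>K. Q * ((d s z)\<^sup>2 + (d s y)\<^sup>2))"
        by (intro sum_mono order_trans[OF two_mult_mult_le_abs_mult_sum_squares]
            mult_right_mono A_bound) auto
      also have "\<dots> = 2 * Q * card K * N s"
        unfolding N_def by (simp add: sum.distrib sum_distrib_left algebra_simps)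
      finally show ?thesis .
    qed
  qed (use init t in \<open>simp_all add: N_def\<close>)
  moreover have "N t \<ge> 0" unfolding N_def by (intro sum_nonneg) auto
  ultimately have "N t = 0" by simp
  with K z show ?thesis unfolding N_def by (simp add: sum_nonneg_eq_0_iff)
qed

definition gen_matrix :: "nat set \<Rightarrow> (('v::finite) conf \<Rightarrow> 'v conf \<Rightarrow> real)
     \<Rightarrow> 'v conf \<Rightarrow> 'v conf \<Rightarrow> real" where
  "gen_matrix Lam q \<eta> \<zeta> = q \<eta> \<zeta> - (if \<zeta> = \<eta> then (\<Sum>\<xi>\<in>sector Lam \<eta>. q \<eta> \<xi>) else 0)"

lemma gen_eq_gen_matrix:
  assumes "\<eta> \<in> Omega Lam"
  shows "gen Lam q v \<eta> = (\<Sum>\<zeta>\<in>sector Lam \<eta>. gen_matrix Lam q \<eta> \<zeta> * v \<zeta>)"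
proof -
  let ?K = "sector Lam \<eta>"
  have "(\<Sum>\<zeta>\<in>?K. gen_matrix Lam q \<eta> \<zeta> * v \<zeta>)
      = (\<Sum>\<zeta>\<in>?K. q \<eta> \<zeta> * v \<zeta>) - (\<Sum>\<zeta>\<in>?K. if \<zeta> = \<eta> then (\<Sum>\<xi>\<in>?K. q \<eta> \<xi>) * v \<eta> else 0)"
    unfolding gen_matrix_def sum_subtractf[symmetric] by (intro sum.cong) (auto simp: algebra_simps)
  also have "\<dots> = gen Lam q v \<eta>"
    using assms finite_sector[of Lam \<eta>] sector_self[of \<eta> Lam]
    by (simp add: gen_def sum.delta' sum_distrib_right right_diff_distrib sum_subtractf)
  finally show ?thesis ..
qed

lemma backward_equation_unique:
  fixes u w :: "real \<Rightarrow> ('v::finite) conf \<Rightarrow> real"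
  assumes \<eta>: "\<eta> \<in> Omega Lam"
    and u: "\<And>z s. z \<in> sector Lam \<eta> \<Longrightarrow> s \<ge> 0 \<Longrightarrow>
      ((\<lambda>s. u s z) has_real_derivative gen Lam q (u s) z) (at s within {0..})"
    and w: "\<And>z s. z \<in> sector Lam \<eta> \<Longrightarrow> s \<ge> 0 \<Longrightarrow>
      ((\<lambda>s. w s z) has_real_derivative gen Lam q (w s) z) (at s within {0..})"
    and init: "\<And>z. z \<in> sector Lam \<eta> \<Longrightarrow> u 0 z = w 0 z"
    and t: "t \<ge> 0"
  shows "u t \<eta> = w t \<eta>"
proof -
  let ?K = "sector Lam \<eta>"
  have "u t \<eta> - w t \<eta> = 0"
  proof (rule linear_ode_zero_solution[where d = "\<lambda>s z. u s z - w s z" and K = ?K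
        and A = "gen_matrix Lam q"])
    fix z and s :: real assume z: "z \<in> ?K" and s: "s \<ge> 0"
    have "z \<in> Omega Lam" using z sector_subset_Omega by blast
    then have "gen Lam q (u s) z - gen Lam q (w s) z
        = (\<Sum>y\<in>?K. gen_matrix Lam q z y * (u s y - w s y))"
      by (simp add: gen_eq_gen_matrix sector_eq[OF z] sum_subtractf[symmetric] right_diff_distrib)
    then show "((\<lambda>s. u s z - w s z) has_real_derivative
        (\<Sum>y\<in>?K. gen_matrix Lam q z y * (u s y - w s y))) (at s within {0..})"
      using DERIV_diff[OF u[OF z s] w[OF z s]] by simp
  qed (use finite_sector init sector_self[OF \<eta>] t in simp_all)
  then show ?thesis by simp
qed

lemma expect_0:
  assumes "config_process Lam q p" and "\<zeta> \<in> Omega Lam"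
  shows "expect Lam p 0 \<zeta> g = g \<zeta>"
proof -
  have "expect Lam p 0 \<zeta> g = (\<Sum>\<xi>\<in>sector Lam \<zeta>. if \<xi> = \<zeta> then g \<zeta> else 0)"
    using assms unfolding expect_def config_process_def by (intro sum.cong) auto
  also have "\<dots> = g \<zeta>" using assms finite_sector[of Lam \<zeta>] sector_self[of \<zeta> Lam] by simp
  finally show ?thesis .
qed

lemma has_real_derivative_expect:
  assumes proc: "config_process Lam q p" and \<zeta>: "\<zeta> \<in> Omega Lam" and s: "s \<ge> 0"
  shows "((\<lambda>s. expect Lam p s \<zeta> g) has_real_derivative
           gen Lam q (\<lambda>\<xi>. expect Lam p s \<xi> g) \<zeta>) (at s within {0..})"
proof -
  let ?K = "sector Lam \<zeta>"
  have p_deriv: "((\<lambda>s. p s \<zeta> \<xi>) has_real_derivative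
      (\<Sum>y\<in>?K. q \<zeta> y * (p s y \<xi> - p s \<zeta> \<xi>))) (at s within {0..})" for \<xi>
    using proc \<zeta> s unfolding config_process_def by blast
  have "((\<lambda>s. expect Lam p s \<zeta> g) has_real_derivative
      (\<Sum>\<xi>\<in>?K. (\<Sum>y\<in>?K. q \<zeta> y * (p s y \<xi> - p s \<zeta> \<xi>)) * g \<xi>)) (at s within {0..})"
    unfolding expect_def by (intro DERIV_sum DERIV_cmult_right p_deriv)
  also have "(\<Sum>\<xi>\<in>?K. (\<Sum>y\<in>?K. q \<zeta> y * (p s y \<xi> - p s \<zeta> \<xi>)) * g \<xi>)
      = (\<Sum>\<xi>\<in>?K. \<Sum>y\<in>?K. q \<zeta> y * (p s y \<xi> * g \<xi> - p s \<zeta> \<xi> * g \<xi>))"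
    by (simp add: sum_distrib_right sum_distrib_left algebra_simps sum_subtractf)
  also have "\<dots> = (\<Sum>y\<in>?K. \<Sum>\<xi>\<in>?K. q \<zeta> y * (p s y \<xi> * g \<xi> - p s \<zeta> \<xi> * g \<xi>))"
    by (rule sum.swap)
  also have "\<dots> = (\<Sum>y\<in>?K. q \<zeta> y * ((\<Sum>\<xi>\<in>?K. p s y \<xi> * g \<xi>) - (\<Sum>\<xi>\<in>?K. p s \<zeta> \<xi> * g \<xi>)))"
    by (simp only: sum_distrib_left[symmetric] sum_subtractf)
  also have "\<dots> = gen Lam q (\<lambda>\<xi>. expect Lam p s \<xi> g) \<zeta>"
    unfolding gen_def expect_def by (intro sum.cong refl) (simp add: sector_eq)
  finally show ?thesis .
qed

lemma has_real_derivative_annih_expect: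
  assumes Lam_down: "\<And>n. Suc n \<in> Lam \<Longrightarrow> n \<in> Lam"
    and proc: "config_process Lam q p" and cons: "consistent Lam q"
    and \<zeta>: "\<zeta> \<in> Omega Lam" and s: "s \<ge> 0"
  shows "((\<lambda>s. annih (\<lambda>\<xi>. expect Lam p s \<xi> f) \<zeta>) has_real_derivative
           gen Lam q (annih (\<lambda>\<xi>. expect Lam p s \<xi> f)) \<zeta>) (at s within {0..})"
proof -
  have "((\<lambda>s. annih (\<lambda>\<xi>. expect Lam p s \<xi> f) \<zeta>) has_real_derivative
      annih (gen Lam q (\<lambda>\<xi>. expect Lam p s \<xi> f)) \<zeta>) (at s within {0..})"
    unfolding annih_def
    by (intro DERIV_sum DERIV_cmult has_real_derivative_expect[OF proc _ s]
        minus_delta_in_Omega[OF Lam_down \<zeta>])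
  also have "annih (gen Lam q (\<lambda>\<xi>. expect Lam p s \<xi> f)) \<zeta>
      = gen Lam q (annih (\<lambda>\<xi>. expect Lam p s \<xi> f)) \<zeta>"
    using cons \<zeta> unfolding consistent_def by simp
  finally show ?thesis .
qed

theorem proposition3p5:
  fixes Lam :: "nat set"
    and q :: "('v::finite) conf \<Rightarrow> 'v conf \<Rightarrow> real"
    and p :: "real \<Rightarrow> 'v conf \<Rightarrow> 'v conf \<Rightarrow> real"
    and f :: "'v conf \<Rightarrow> real"
    and \<eta> :: "'v conf" and t :: real
  assumes Lam0: "0 \<in> Lam"
    and Lam_down: "\<And>n. Suc n \<in> Lam \<Longrightarrow> n \<in> Lam"
    and proc: "config_process Lam q p"
    and cons: "consistent Lam q"
    and eta: "\<eta> \<in> Omega Lam"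
    and t: "t \<ge> 0"
  shows "(\<Sum>i\<in>UNIV. expect Lam p t \<eta> (\<lambda>\<xi>. real (\<xi> i) * f (minus_delta \<xi> i)))
       = (\<Sum>i\<in>UNIV. real (\<eta> i) * expect Lam p t (minus_delta \<eta> i) f)"
proof -
  have "expect Lam p t \<eta> (annih f) = annih (\<lambda>\<xi>. expect Lam p t \<xi> f) \<eta>"
  proof (rule backward_equation_unique[OF eta _ _ _ t])
    fix z assume "z \<in> sector Lam \<eta>"
    then have z: "z \<in> Omega Lam" using sector_subset_Omega by blast
    show "((\<lambda>s. expect Lam p s z (annih f)) has_real_derivative
        gen Lam q (\<lambda>\<xi>. expect Lam p s \<xi> (annih f)) z) (at s within {0..})" if "s \<ge> 0" for s
      using has_real_derivative_expect[OF proc z that] .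
    show "((\<lambda>s. annih (\<lambda>\<xi>. expect Lam p s \<xi> f) z) has_real_derivative
        gen Lam q (annih (\<lambda>\<xi>. expect Lam p s \<xi> f)) z) (at s within {0..})" if "s \<ge> 0" for s
      using has_real_derivative_annih_expect[OF Lam_down proc cons z that] .
    show "expect Lam p 0 z (annih f) = annih (\<lambda>\<xi>. expect Lam p 0 \<xi> f) z"
      using z by (simp add: annih_def expect_0[OF proc] minus_delta_in_Omega[OF Lam_down])
  qed
  then show ?thesis
    by (simp add: expect_def annih_def sum_distrib_left sum.swap[where A = UNIV])
qed

end
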